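(* Let $m,\gamma\in\mathbb{N}$ with $2\gamma<m$. Define $$\mu(v,j):=2^{m-\gamma}v+2^{m-2\gamma}(v\oplus 2^j),\qquad 0\le v<2^\gamma,\ 0\le j<\gamma,$$ and $$P_{m,\gamma}(x):=\frac{1}{\sqrt{\gamma}}\sum_{v=0}^{2^\gamma-1}\sum_{j=0}^{\gamma-1}w_{\mu(v,j)}(x).$$ Then: (i) $\|P_{m,\gamma}\|_{L^1([0,1))}\le 1$; (ii) $\|P_{m,\gamma}\|_{L^\infty([0,1))}\le 2^\gamma\sqrt{\gamma}$; (iii) $\mathrm{Spec}(P_{m,\gamma})\subset[2^{m-2\gamma},2^m)\cap 2^{m-2\gamma}\mathbb{N}_0$; (iv) for every $x\in[0,1)$ there exists an integer $\ell(x)\in[2^{m-\gamma},2^m)\cap 2^{m-2\gamma}\mathbb{N}$ such that $|S_{\ell(x)}(P_{m,\gamma};x)|\ge\frac14\sqrt{\gamma}$.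
   Context: For nonnegative integers $n=\sum_j n_j2^j$, $m=\sum_j m_j2^j$ (binary expansions, $n_j,m_j\in\{0,1\}$), the dyadic sum is $n\oplus m:=\sum_{j\ge0}|n_j-m_j|2^j$. The Rademacher functions are $r_j(x):=(-1)^{\lfloor 2^{j+1}x\rfloor}$ on $[0,1)$, $j\in\mathbb{N}_0$, and the Walsh--Paley functions are $w_n(x):=\prod_{j\ge0}r_j(x)^{n_j}$. For $f\in L^1([0,1))$, $\widehat f(n):=\int_0^1 f w_n$, and $S_n(f;x):=\sum_{k=0}^{n-1}\widehat f(k)w_k(x)$. For a Walsh polynomial $P$, $\mathrm{Spec}(P):=\{k\in\mathbb{N}_0:\widehat P(k)\ne0\}$. Here $2^{s}\mathbb{N}_0$ (resp. $2^s\mathbb{N}$) denotes the set of nonnegative (resp. positive) integer multiples of $2^s$. *)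

theory Defs
  imports "HOL-Analysis.Analysis"
begin

text \<open>Dyadic sum: bitwise exclusive or on naturals, i.e. sum of |n_j - m_j| 2^j.\<close>
definition dyadic_sum :: "nat \<Rightarrow> nat \<Rightarrow> nat" where
  "dyadic_sum n m = (\<Sum>j<max n m + 1. (if bit n j = bit m j then 0 else 1) * 2 ^ j)"

definition rademacher :: "nat \<Rightarrow> real \<Rightarrow> real" where
  "rademacher j x = (-1) powi \<lfloor>2 ^ (j + 1) * x\<rfloor>"

definition walsh :: "nat \<Rightarrow> real \<Rightarrow> real" where
  "walsh n x = (\<Prod>j<n + 1. rademacher j x ^ (if bit n j then 1 else 0))"

definition walsh_coeff :: "(real \<Rightarrow> real) \<Rightarrow> nat \<Rightarrow> real" where
  "walsh_coeff f n = (LINT x:{0..<1}|lborel. f x * walsh n x)"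

definition walsh_partial_sum :: "(real \<Rightarrow> real) \<Rightarrow> nat \<Rightarrow> real \<Rightarrow> real" where
  "walsh_partial_sum f n x = (\<Sum>k<n. walsh_coeff f k * walsh k x)"

definition walsh_spec :: "(real \<Rightarrow> real) \<Rightarrow> nat set" where
  "walsh_spec P = {k. walsh_coeff P k \<noteq> 0}"

definition mu :: "nat \<Rightarrow> nat \<Rightarrow> nat \<Rightarrow> nat \<Rightarrow> nat" where
  "mu m \<gamma> v j = 2 ^ (m - \<gamma>) * v + 2 ^ (m - 2 * \<gamma>) * dyadic_sum v (2 ^ j)"

definition P_poly :: "nat \<Rightarrow> nat \<Rightarrow> real \<Rightarrow> real" where
  "P_poly m \<gamma> x = (1 / sqrt (real \<gamma>)) *
     (\<Sum>v<2 ^ \<gamma>. \<Sum>j<\<gamma>. walsh (mu m \<gamma> v j) x)"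

end

(*
  The Walsh functions are the characters of the dyadic group: w_a w_b = w_(a XOR b), and w_n
  with n < 2^N is constant on the dyadic intervals of length 2^-N.  Integrals of Walsh
  polynomials therefore reduce to finite averages over a dyadic grid, which makes the w_n
  orthonormal on [0,1).

  With k = m - 2 gamma one has mu(v,j) = (2^(m-gamma) v XOR 2^k v) XOR 2^(k+j), so
  sqrt gamma * P = E * R, where E = sum_v w_(2^(m-gamma) v XOR 2^k v) and R = sum_j w_(2^(k+j))
  is a sum of gamma Rademacher functions.  The frequencies of E form a group under XOR, hence
  E^2 = 2^gamma E: E only takes the values 0 and 2^gamma, and its integral is 1.  Pointwise
  |P| <= (P^2 / 2^gamma + E) / 2, and Parseval gives integral P^2 = 2^gamma, so ||P||_1 <= 1.

  For the partial sums at x, let s be the sign taken by at least half of the w_(2^(k+j))(x),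
  and let V be the number whose binary digits mark these j.  The partial sums of order
  2^k (2^gamma V) and 2^k (2^gamma V + V) differ exactly by the terms mu(V,j) with bit j of V
  set.  These terms all equal the same sign times 1 / sqrt gamma, so their sum has modulus at
  least sqrt gamma / 2, and one of the two partial sums is at least sqrt gamma / 4 in modulus.
*)

theory Submission
  imports Defs
begin

unbundle bit_operations_syntax

subsection \<open>Binary arithmetic\<close>

lemma less_two_power_Suc:
  assumes "(n::nat) \<le> K"
  shows "n < 2 ^ Suc K"
proof -
  have "n < 2 ^ n"
    by (rule less_exp)
  also have "(2::nat) ^ n \<le> 2 ^ Suc K"
    using assms by (intro power_increasing) auto
  finally show ?thesis .
qed

lemma less_power_imp_not_bit: "(n::nat) < 2 ^ K \<Longrightarrow> K \<le> j \<Longrightarrow> \<not> bit n j"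
  by (metis bit_take_bit_iff not_le take_bit_nat_eq_self)

lemma xor_less_power: "(a::nat) < 2 ^ K \<Longrightarrow> b < 2 ^ K \<Longrightarrow> a XOR b < 2 ^ K"
  by (metis take_bit_nat_eq_self take_bit_nat_less_exp take_bit_xor)

lemma xor_eq_0_iff: "(a::nat) XOR b = 0 \<longleftrightarrow> a = b"
  by (auto simp: bit_eq_iff bit_xor_iff)

lemma power2_mult_xor: "(2 ^ s * a) XOR (2 ^ s * b) = (2 ^ s * (a XOR b) :: nat)"
  using push_bit_xor[of s a b] by (simp add: push_bit_eq_mult mult.commute)

lemma power2_mult_add_eq_xor:
  assumes "(e::nat) < 2 ^ s"
  shows "2 ^ s * v + e = (2 ^ s * v) XOR e"
proof (rule disjunctive_add_eq_xor, rule bit_eqI)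
  fix n
  have "\<not> (bit (2 ^ s * v) n \<and> bit e n)"
    using less_power_imp_not_bit[OF assms]
    by (auto simp: bit_push_bit_iff_nat push_bit_eq_mult[symmetric] mult.commute)
  then show "bit (2 ^ s * v AND e) n = bit 0 n"
    by (simp add: bit_and_iff)
qed

lemma xor_power2_less_iff: "((V::nat) XOR 2 ^ j < V) \<longleftrightarrow> bit V j"
proof (cases "bit V j")
  case True
  then have "(V XOR 2 ^ j) AND 2 ^ j = 0"
    by (intro bit_eqI) (auto simp: bit_and_iff bit_xor_iff bit_exp_iff)
  then have "(V XOR 2 ^ j) + 2 ^ j = V"
    by (simp add: disjunctive_add_eq_xor xor.assoc)
  with True show ?thesis
    by (metis less_add_same_cancel1 zero_less_power pos2)
next
  case False
  then have "V AND 2 ^ j = 0"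
    by (intro bit_eqI) (auto simp: bit_and_iff bit_exp_iff)
  then have "V + 2 ^ j = V XOR 2 ^ j"
    by (rule disjunctive_add_eq_xor)
  with False show ?thesis
    by (metis not_add_less1)
qed

lemma mult_add_less_mult_add_iff:
  fixes b e e' v v' :: nat
  assumes "e < b" "e' < b"
  shows "b * v + e < b * v' + e' \<longleftrightarrow> v < v' \<or> v = v' \<and> e < e'"
proof -
  have less: "b * x + d < b * y" if "x < y" "d < b" for x y d :: nat
  proof -
    have "b * x + d < b * (x + 1)" using that by simp
    also have "\<dots> \<le> b * y" using that by (intro mult_le_mono2) simp
    finally show ?thesis .
  qed
  show ?thesis
    using less[of v v' e] less[of v' v e'] assms by (cases v v' rule: linorder_cases) auto
qed

lemma dyadic_sum_eq_xor: "dyadic_sum n m = n XOR m"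
proof -
  have "n XOR m < 2 ^ (max n m + 1)"
    using less_two_power_Suc[of n "max n m"] less_two_power_Suc[of m "max n m"]
    by (intro xor_less_power) auto
  then have "n XOR m = take_bit (max n m + 1) (n XOR m)"
    by (rule take_bit_nat_eq_self[symmetric])
  also have "\<dots> = (\<Sum>j<max n m + 1. (if bit n j = bit m j then 0 else 1) * 2 ^ j)"
    unfolding take_bit_sum by (rule sum.cong) (auto simp: bit_xor_iff push_bit_eq_mult)
  finally show ?thesis
    unfolding dyadic_sum_def by simp
qed

subsection \<open>Walsh functions\<close>

lemma rademacher_eq: "rademacher j x = (if even \<lfloor>2 ^ (j + 1) * x\<rfloor> then 1 else -1)"
  unfolding rademacher_def by (metis power_int_minus_left power_int_1_left)

lemma rademacher_Suc: "rademacher (Suc j) x = rademacher j (2 * x)"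
  unfolding rademacher_def by (simp add: mult.assoc)

lemma rademacher_add_1: "rademacher j (x + 1) = rademacher j x"
proof -
  have "(2::real) ^ (j + 1) * (x + 1) = 2 ^ (j + 1) * x + of_int (2 ^ (j + 1))"
    by (simp add: algebra_simps)
  then have "\<lfloor>2 ^ (j + 1) * (x + 1)\<rfloor> = \<lfloor>2 ^ (j + 1) * x\<rfloor> + 2 ^ (j + 1)"
    by (metis floor_add_int)
  then show ?thesis
    by (simp add: rademacher_eq)
qed

lemma rademacher_0_add_half: "rademacher 0 (x + 1 / 2) = - rademacher 0 x"
proof -
  have "\<lfloor>2 * (x + 1 / 2)\<rfloor> = \<lfloor>2 * x\<rfloor> + 1"
    by (simp add: algebra_simps)
  then show ?thesis
    by (simp add: rademacher_eq)
qed

lemma rademacher_0_first_half: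
  assumes "0 \<le> x" "x < 1 / 2"
  shows "rademacher 0 x = 1"
proof -
  have "\<lfloor>2 * x\<rfloor> = 0"
    using assms by (simp add: floor_eq_iff)
  then show ?thesis
    by (simp add: rademacher_eq)
qed

lemma walsh_eq_prod:
  assumes "n < 2 ^ K"
  shows "walsh n x = (\<Prod>j<K. rademacher j x ^ (if bit n j then 1 else 0))"
proof -
  let ?g = "\<lambda>j. rademacher j x ^ (if bit n j then 1 else 0)"
  let ?M = "max K (n + 1)"
  have "prod ?g {..<n + 1} = prod ?g {..<?M}"
    using less_power_imp_not_bit[OF less_two_power_Suc[of n n]]
    by (intro prod.mono_neutral_left) auto
  moreover have "prod ?g {..<K} = prod ?g {..<?M}"
    using less_power_imp_not_bit[OF assms]
    by (intro prod.mono_neutral_left) auto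
  ultimately show ?thesis
    unfolding walsh_def by simp
qed

lemma walsh_0 [simp]: "walsh 0 x = 1"
  unfolding walsh_def by simp

lemma walsh_xor: "walsh (a XOR b) x = walsh a x * walsh b x"
proof -
  define K where "K = Suc (max a b)"
  have a: "a < 2 ^ K" and b: "b < 2 ^ K"
    unfolding K_def by (simp_all only: less_two_power_Suc max.cobounded1 max.cobounded2)
  show ?thesis
    unfolding walsh_eq_prod[OF a] walsh_eq_prod[OF b] walsh_eq_prod[OF xor_less_power[OF a b]]
      prod.distrib[symmetric]
    by (rule prod.cong) (auto simp: bit_xor_iff rademacher_eq)
qed

lemma walsh_mult_self: "walsh n x * walsh n x = 1"
  by (metis walsh_xor xor_self_eq walsh_0)

lemma abs_walsh [simp]: "\<bar>walsh n x\<bar> = 1"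
  by (metis walsh_mult_self real_sqrt_abs2 real_sqrt_one)

lemma walsh_eq_rademacher_mult: "walsh n x = (if odd n then rademacher 0 x else 1) * walsh (n div 2) (2 * x)"
proof -
  define K where "K = Suc n"
  have n: "n < 2 ^ Suc K"
    unfolding K_def by (intro less_two_power_Suc) simp
  then have n2: "n div 2 < 2 ^ K"
    by simp
  show ?thesis
    unfolding walsh_eq_prod[OF n] walsh_eq_prod[OF n2] prod.lessThan_Suc_shift
    by (simp add: rademacher_Suc bit_Suc bit_0)
qed

lemma walsh_add_1: "walsh n (x + 1) = walsh n x"
  using walsh_eq_prod[OF less_two_power_Suc[of n n]] by (simp add: rademacher_add_1)

lemma walsh_add_half: "walsh n (x + 1 / 2) = (if odd n then -1 else 1) * walsh n x"
proof -
  have "walsh (n div 2) (2 * (x + 1 / 2)) = walsh (n div 2) (2 * x)"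
    using walsh_add_1[of "n div 2" "2 * x"] by (simp add: algebra_simps)
  then show ?thesis
    by (subst (1 2) walsh_eq_rademacher_mult) (simp add: rademacher_0_add_half)
qed

lemma sum_lessThan_power2_Suc:
  fixes g :: "nat \<Rightarrow> 'a::comm_monoid_add"
  shows "(\<Sum>i<2 ^ Suc N. g i) = (\<Sum>i<2 ^ N. g i) + (\<Sum>i<2 ^ N. g (i + 2 ^ N))"
proof -
  have "{..<(2::nat) ^ Suc N} = {..<2 ^ N} \<union> {2 ^ N..<2 ^ N + 2 ^ N}"
    by auto
  moreover have "(\<Sum>i\<in>{2 ^ N..<2 ^ N + 2 ^ N}. g i) = (\<Sum>i<2 ^ N. g (i + 2 ^ N))"
    using sum.shift_bounds_nat_ivl[of g 0 "2 ^ N" "2 ^ N"] by (simp add: atLeast0LessThan)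
  ultimately show ?thesis
    by (simp add: sum.union_disjoint ivl_disj_int(2))
qed

lemma sum_walsh_dyadic_grid:
  "n < 2 ^ N \<Longrightarrow> (\<Sum>i<2 ^ N. walsh n (real i / 2 ^ N)) = (if n = 0 then 2 ^ N else 0)"
proof (induction N arbitrary: n)
  case 0
  then show ?case by simp
next
  case (Suc N)
  let ?S = "\<Sum>i<2 ^ N. walsh n (real i / 2 ^ Suc N)"
  have first_half: "walsh n (real i / 2 ^ Suc N) = walsh (n div 2) (real i / 2 ^ N)"
    if "i < 2 ^ N" for i
  proof -
    have "real i / 2 ^ Suc N < 1 / 2"
      using that by (simp add: field_simps)
    then show ?thesis
      by (subst walsh_eq_rademacher_mult) (simp add: rademacher_0_first_half)
  qed
  have second_half: "walsh n (real (i + 2 ^ N) / 2 ^ Suc N)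
      = (if odd n then -1 else 1) * walsh n (real i / 2 ^ Suc N)" for i
  proof -
    have "real (i + 2 ^ N) / 2 ^ Suc N = real i / 2 ^ Suc N + 1 / 2"
      by (simp add: field_simps)
    then show ?thesis
      by (simp add: walsh_add_half)
  qed
  have "(\<Sum>i<2 ^ Suc N. walsh n (real i / 2 ^ Suc N))
      = ?S + (\<Sum>i<2 ^ N. walsh n (real (i + 2 ^ N) / 2 ^ Suc N))"
    by (simp only: sum_lessThan_power2_Suc of_nat_add)
  also have "\<dots> = ?S + (if odd n then -1 else 1) * ?S"
    by (simp only: second_half sum_distrib_left[symmetric])
  also have "\<dots> = (1 + (if odd n then -1 else 1)) * ?S"
    by (simp only: distrib_right mult_1_left)
  also have "?S = (\<Sum>i<2 ^ N. walsh (n div 2) (real i / 2 ^ N))"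
    by (rule sum.cong) (simp_all only: first_half lessThan_iff)
  also have "\<dots> = (if n div 2 = 0 then 2 ^ N else 0)"
    using Suc.prems by (intro Suc.IH) simp
  finally show ?case
    by (cases "odd n") (auto simp: odd_pos)
qed

lemma floor_power2_mult_floor:
  fixes x :: real
  assumes "j \<le> N"
  shows "\<lfloor>2 ^ j * (real_of_int \<lfloor>2 ^ N * x\<rfloor> / 2 ^ N)\<rfloor> = \<lfloor>2 ^ j * x\<rfloor>"
proof -
  define d :: nat where "d = 2 ^ (N - j)"
  have N: "(2::real) ^ N = 2 ^ j * real d"
    using assms unfolding d_def by (simp flip: power_add)
  have "\<lfloor>2 ^ j * x\<rfloor> = \<lfloor>(2 ^ N * x) / real_of_int (int d)\<rfloor>"
    using N by (simp add: field_simps d_def)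
  also have "\<dots> = \<lfloor>2 ^ N * x\<rfloor> div int d"
    by (rule floor_divide_real_eq_div) simp
  also have "\<dots> = \<lfloor>real_of_int \<lfloor>2 ^ N * x\<rfloor> / real_of_int (int d)\<rfloor>"
    by (simp only: floor_divide_of_int_eq)
  also have "\<dots> = \<lfloor>2 ^ j * (real_of_int \<lfloor>2 ^ N * x\<rfloor> / 2 ^ N)\<rfloor>"
    using N by (simp add: field_simps d_def)
  finally show ?thesis ..
qed

lemma walsh_dyadic_step:
  assumes "n < 2 ^ N"
  shows "walsh n (real_of_int \<lfloor>2 ^ N * x\<rfloor> / 2 ^ N) = walsh n x"
  unfolding walsh_eq_prod[OF assms] rademacher_def
  by (intro prod.cong refl) (simp only: floor_power2_mult_floor lessThan_iff Suc_eq_plus1[symmetric] Suc_leI)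

subsection \<open>Integrals of dyadic step functions\<close>

lemma floor_power2_mult_eq_iff:
  fixes x :: real
  shows "\<lfloor>2 ^ N * x\<rfloor> = int i \<longleftrightarrow> x \<in> {real i / 2 ^ N..<(real i + 1) / 2 ^ N}"
  by (auto simp: floor_eq_iff field_simps)

lemma unit_interval_eq_UN_dyadic:
  "{0..<1::real} = (\<Union>i<2 ^ N. {real i / 2 ^ N..<(real i + 1) / 2 ^ N})"
proof (intro equalityI subsetI)
  fix x :: real
  assume x: "x \<in> {0..<1}"
  define i where "i = nat \<lfloor>2 ^ N * x\<rfloor>"
  have "\<lfloor>2 ^ N * x\<rfloor> = int i"
    using x unfolding i_def by simp
  moreover have "i < 2 ^ N"
    using x unfolding i_def by (simp add: nat_less_iff floor_less_iff)
  ultimately show "x \<in> (\<Union>i<2 ^ N. {real i / 2 ^ N..<(real i + 1) / 2 ^ N})"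
    unfolding floor_power2_mult_eq_iff by blast
next
  fix x :: real
  assume "x \<in> (\<Union>i<2 ^ N. {real i / 2 ^ N..<(real i + 1) / 2 ^ N})"
  then obtain i :: nat where i: "i < 2 ^ N" "real i / 2 ^ N \<le> x" "x < (real i + 1) / 2 ^ N"
    by auto
  have "real i + 1 \<le> 2 ^ N"
    using i(1) by (metis Suc_leI of_nat_Suc of_nat_le_iff of_nat_numeral of_nat_power add.commute)
  then have "(real i + 1) / 2 ^ N \<le> 1"
    by simp
  moreover have "0 \<le> real i / 2 ^ N"
    by simp
  ultimately show "x \<in> {0..<1}"
    unfolding atLeastLessThan_iff using i(2,3) by linarith
qed

lemma
  fixes f :: "real \<Rightarrow> real"
  assumes "a \<le> b" and const: "\<And>x. x \<in> {a..<b} \<Longrightarrow> f x = c"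
  shows set_integrable_Ico_constant_on: "set_integrable lborel {a..<b} f"
    and set_integral_Ico_constant_on: "(LINT x:{a..<b}|lborel. f x) = (b - a) * c"
proof -
  have "set_integrable lborel {a..<b} (\<lambda>_. c)"
    unfolding set_integrable_def using assms(1)
    by (intro integrable_scaleR_left integrable_real_indicator) auto
  moreover have "set_integrable lborel {a..<b} f = set_integrable lborel {a..<b} (\<lambda>_. c)"
    using const by (intro set_integrable_cong) simp_all
  ultimately show "set_integrable lborel {a..<b} f"
    by simp
  have "(LINT x:{a..<b}|lborel. f x) = (LINT x:{a..<b}|lborel. c)"
    using const by (intro set_lebesgue_integral_cong) simp_all
  also have "\<dots> = (b - a) * c"
    using assms(1) by (subst set_integral_const) auto
  finally show "(LINT x:{a..<b}|lborel. f x) = (b - a) * c" .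
qed

lemma integral_dyadic_step:
  fixes f :: "real \<Rightarrow> real"
  assumes step: "\<And>x. x \<in> {0..<1} \<Longrightarrow> f (real_of_int \<lfloor>2 ^ N * x\<rfloor> / 2 ^ N) = f x"
  shows "set_integrable lborel {0..<1} f"
    and "(LINT x:{0..<1}|lborel. f x) = (\<Sum>i<2 ^ N. f (real i / 2 ^ N)) / 2 ^ N"
proof -
  define cell where "cell i = {real i / 2 ^ N..<(real i + 1) / 2 ^ N}" for i :: nat
  have cover: "{0..<1} = (\<Union>i<2 ^ N. cell i)"
    unfolding cell_def by (rule unit_interval_eq_UN_dyadic)
  have cell_le: "real i / 2 ^ N \<le> (real i + 1) / 2 ^ N" for i
    by (simp add: divide_right_mono)
  have f_cell: "f x = f (real i / 2 ^ N)" if "i < 2 ^ N" "x \<in> cell i" for i x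
  proof -
    have "\<lfloor>2 ^ N * x\<rfloor> = int i"
      using that(2) unfolding cell_def floor_power2_mult_eq_iff .
    moreover have "x \<in> {0..<1}"
      using that cover by blast
    ultimately show ?thesis
      using step[of x] by simp
  qed
  note cell_constant = set_integrable_Ico_constant_on[OF cell_le] set_integral_Ico_constant_on[OF cell_le]
  have cell_sets: "cell i \<in> sets borel" for i
    unfolding cell_def by simp
  have integrable_cell: "set_integrable lborel (cell i) f" if "i < 2 ^ N" for i
    using f_cell[OF that] unfolding cell_def by (intro cell_constant(1)[where c = "f (real i / 2 ^ N)"]) blast
  show "set_integrable lborel {0..<1} f"
    unfolding cover by (rule set_integrable_UN) (simp_all add: integrable_cell cell_sets)
  have disjoint: "AE x in lborel. x \<in> cell i \<and> x \<in> cell j \<longrightarrow> i = j" for i j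
    unfolding cell_def floor_power2_mult_eq_iff[symmetric] by simp
  have "(LINT x:{0..<1}|lborel. f x) = (\<Sum>i<2 ^ N. LINT x:cell i|lborel. f x)"
    unfolding cover by (rule set_integral_finite_UN_AE[OF _ disjoint]) (simp_all add: cell_sets integrable_cell)
  also have "\<dots> = (\<Sum>i<2 ^ N. f (real i / 2 ^ N) / 2 ^ N)"
  proof (intro sum.cong refl)
    fix i :: nat
    assume "i \<in> {..<2 ^ N}"
    then have "(LINT x:cell i|lborel. f x) = ((real i + 1) / 2 ^ N - real i / 2 ^ N) * f (real i / 2 ^ N)"
      unfolding cell_def by (intro cell_constant(2) f_cell) (simp_all add: cell_def)
    also have "\<dots> = f (real i / 2 ^ N) / 2 ^ N"
      by (simp add: field_simps)
    finally show "(LINT x:cell i|lborel. f x) = f (real i / 2 ^ N) / 2 ^ N" .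
  qed
  finally show "(LINT x:{0..<1}|lborel. f x) = (\<Sum>i<2 ^ N. f (real i / 2 ^ N)) / 2 ^ N"
    by (simp add: sum_divide_distrib)
qed

subsection \<open>Walsh polynomials\<close>

lemma walsh_sum_dyadic_step:
  assumes "\<And>i. i \<in> I \<Longrightarrow> \<kappa> i < 2 ^ N"
  shows "(\<Sum>i\<in>I. c i * walsh (\<kappa> i) (real_of_int \<lfloor>2 ^ N * x\<rfloor> / 2 ^ N)) = (\<Sum>i\<in>I. c i * walsh (\<kappa> i) x)"
  using assms by (simp add: walsh_dyadic_step)

lemma obtain_power2_bound:
  fixes \<kappa> :: "'a \<Rightarrow> nat"
  assumes "finite I"
  obtains N where "\<And>i. i \<in> I \<Longrightarrow> \<kappa> i < 2 ^ N"
proof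
  fix i
  assume "i \<in> I"
  then have "\<kappa> i \<le> Max (insert 0 (\<kappa> ` I))"
    using assms by (intro Max_ge) auto
  then show "\<kappa> i < 2 ^ Suc (Max (insert 0 (\<kappa> ` I)))"
    by (rule less_two_power_Suc)
qed

lemma
  fixes c :: "'a \<Rightarrow> real" and \<kappa> :: "'a \<Rightarrow> nat"
  assumes "finite I"
  shows set_integrable_walsh_sum: "set_integrable lborel {0..<1} (\<lambda>x. \<Sum>i\<in>I. c i * walsh (\<kappa> i) x)"
    and integral_walsh_sum:
      "(LINT x:{0..<1}|lborel. \<Sum>i\<in>I. c i * walsh (\<kappa> i) x) = (\<Sum>i\<in>I. if \<kappa> i = 0 then c i else 0)"
proof -
  obtain N where N: "\<And>i. i \<in> I \<Longrightarrow> \<kappa> i < 2 ^ N"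
    using obtain_power2_bound[OF assms] by blast
  note step = integral_dyadic_step[where N=N and f="\<lambda>x. \<Sum>i\<in>I. c i * walsh (\<kappa> i) x",
      OF walsh_sum_dyadic_step[OF N]]
  show "set_integrable lborel {0..<1} (\<lambda>x. \<Sum>i\<in>I. c i * walsh (\<kappa> i) x)"
    by (rule step(1))
  have "(\<Sum>p<2 ^ N. \<Sum>i\<in>I. c i * walsh (\<kappa> i) (real p / 2 ^ N))
      = (\<Sum>i\<in>I. c i * (\<Sum>p<2 ^ N. walsh (\<kappa> i) (real p / 2 ^ N)))"
    by (simp add: sum_distrib_left sum.swap[of _ I])
  also have "\<dots> = (\<Sum>i\<in>I. 2 ^ N * (if \<kappa> i = 0 then c i else 0))"
    by (intro sum.cong refl) (simp add: sum_walsh_dyadic_grid N)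
  finally show "(LINT x:{0..<1}|lborel. \<Sum>i\<in>I. c i * walsh (\<kappa> i) x) = (\<Sum>i\<in>I. if \<kappa> i = 0 then c i else 0)"
    using step(2) by (simp add: sum_distrib_left[symmetric])
qed

lemma walsh_coeff_walsh_sum:
  assumes "finite I"
  shows "walsh_coeff (\<lambda>x. \<Sum>i\<in>I. c i * walsh (\<kappa> i) x) n = (\<Sum>i\<in>I. if \<kappa> i = n then c i else 0)"
proof -
  have "(\<Sum>i\<in>I. c i * walsh (\<kappa> i) x) * walsh n x = (\<Sum>i\<in>I. c i * walsh (\<kappa> i XOR n) x)" for x
    by (simp add: sum_distrib_right walsh_xor mult.assoc)
  then show ?thesis
    unfolding walsh_coeff_def by (simp add: integral_walsh_sum[OF assms] xor_eq_0_iff)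
qed

lemma walsh_spec_walsh_sum:
  assumes "finite I"
  shows "walsh_spec (\<lambda>x. \<Sum>i\<in>I. c i * walsh (\<kappa> i) x) \<subseteq> \<kappa> ` I"
proof
  fix n
  assume "n \<in> walsh_spec (\<lambda>x. \<Sum>i\<in>I. c i * walsh (\<kappa> i) x)"
  then have "(\<Sum>i\<in>I. if \<kappa> i = n then c i else 0) \<noteq> 0"
    unfolding walsh_spec_def walsh_coeff_walsh_sum[OF assms] by simp
  then obtain i where "i \<in> I" "(if \<kappa> i = n then c i else 0) \<noteq> 0"
    using sum.not_neutral_contains_not_neutral by blast
  then show "n \<in> \<kappa> ` I"
    by (auto split: if_splits)
qed

lemma walsh_partial_sum_walsh_sum:
  assumes "finite I"
  shows "walsh_partial_sum (\<lambda>x. \<Sum>i\<in>I. c i * walsh (\<kappa> i) x) l x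
    = (\<Sum>i\<in>I. if \<kappa> i < l then c i * walsh (\<kappa> i) x else 0)"
proof -
  have "(if \<kappa> i = k then c i else 0) * walsh k x = (if \<kappa> i = k then c i * walsh (\<kappa> i) x else 0)"
    for i k
    by simp
  then have "walsh_partial_sum (\<lambda>x. \<Sum>i\<in>I. c i * walsh (\<kappa> i) x) l x
      = (\<Sum>i\<in>I. \<Sum>k<l. if \<kappa> i = k then c i * walsh (\<kappa> i) x else 0)"
    unfolding walsh_partial_sum_def walsh_coeff_walsh_sum[OF assms] sum_distrib_right
    by (subst sum.swap) (simp only:)
  then show ?thesis
    by (simp only: sum.delta' finite_lessThan lessThan_iff)
qed

lemma
  fixes c :: "'a \<Rightarrow> real" and \<kappa> :: "'a \<Rightarrow> nat"
  assumes "finite I" and "inj_on \<kappa> I"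
  shows set_integrable_walsh_sum_square:
      "set_integrable lborel {0..<1} (\<lambda>x. (\<Sum>i\<in>I. c i * walsh (\<kappa> i) x) * (\<Sum>i\<in>I. c i * walsh (\<kappa> i) x))"
    and integral_walsh_sum_square:
      "(LINT x:{0..<1}|lborel. (\<Sum>i\<in>I. c i * walsh (\<kappa> i) x) * (\<Sum>i\<in>I. c i * walsh (\<kappa> i) x))
        = (\<Sum>i\<in>I. c i * c i)"
proof -
  let ?c2 = "\<lambda>(i, j). c i * c j" and ?\<kappa>2 = "\<lambda>(i, j). \<kappa> i XOR \<kappa> j"
  have square: "(\<Sum>i\<in>I. c i * walsh (\<kappa> i) x) * (\<Sum>i\<in>I. c i * walsh (\<kappa> i) x)
      = (\<Sum>p\<in>I \<times> I. ?c2 p * walsh (?\<kappa>2 p) x)" for x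
    unfolding sum_product sum.cartesian_product by (intro sum.cong refl) (clarsimp simp: walsh_xor)
  show "set_integrable lborel {0..<1} (\<lambda>x. (\<Sum>i\<in>I. c i * walsh (\<kappa> i) x) * (\<Sum>i\<in>I. c i * walsh (\<kappa> i) x))"
    unfolding square using assms(1) by (intro set_integrable_walsh_sum) simp
  have "(\<Sum>p\<in>I \<times> I. if ?\<kappa>2 p = 0 then ?c2 p else 0) = (\<Sum>(i, j)\<in>I \<times> I. if i = j then c i * c j else 0)"
    using assms(2) by (intro sum.cong refl) (auto simp: xor_eq_0_iff inj_on_eq_iff)
  also have "\<dots> = (\<Sum>i\<in>I. c i * c i)"
    unfolding sum.cartesian_product[symmetric] using assms(1) by simp
  finally show "(LINT x:{0..<1}|lborel. (\<Sum>i\<in>I. c i * walsh (\<kappa> i) x) * (\<Sum>i\<in>I. c i * walsh (\<kappa> i) x))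
        = (\<Sum>i\<in>I. c i * c i)"
    unfolding square integral_walsh_sum[OF finite_cartesian_product[OF assms(1) assms(1)]] .
qed

subsection \<open>The polynomial\<close>

lemma mu_eq:
  assumes "2 * \<gamma> \<le> m"
  shows "mu m \<gamma> v j = 2 ^ (m - 2 * \<gamma>) * (2 ^ \<gamma> * v + (v XOR 2 ^ j))"
proof -
  have "(2::nat) ^ (m - \<gamma>) = 2 ^ (m - 2 * \<gamma>) * 2 ^ \<gamma>"
    using assms by (simp flip: power_add)
  then show ?thesis
    unfolding mu_def dyadic_sum_eq_xor by (simp add: algebra_simps)
qed

lemma mu_less:
  assumes "2 * \<gamma> \<le> m" "v < 2 ^ \<gamma>" "j < \<gamma>"
  shows "mu m \<gamma> v j < 2 ^ m"
proof -
  have "v XOR 2 ^ j < 2 ^ \<gamma>"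
    using assms by (intro xor_less_power) auto
  then have "2 ^ \<gamma> * v + (v XOR 2 ^ j) < 2 ^ \<gamma> * 2 ^ \<gamma> + 0"
    using assms(2) by (subst mult_add_less_mult_add_iff) auto
  then have "mu m \<gamma> v j < 2 ^ (m - 2 * \<gamma>) * (2 ^ \<gamma> * 2 ^ \<gamma>)"
    unfolding mu_eq[OF assms(1)] by simp
  also have "\<dots> = 2 ^ m"
    using assms(1) by (simp flip: power_add)
  finally show ?thesis .
qed

lemma inj_on_mu:
  assumes "2 * \<gamma> \<le> m"
  shows "inj_on (\<lambda>(v, j). mu m \<gamma> v j) ({..<2 ^ \<gamma>} \<times> {..<\<gamma>})"
proof (rule inj_onI, clarsimp)
  fix v j v' j'
  assume v: "v < 2 ^ \<gamma>" "v' < 2 ^ \<gamma>" and j: "j < \<gamma>" "j' < \<gamma>"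
    and eq: "mu m \<gamma> v j = mu m \<gamma> v' j'"
  have e: "v XOR 2 ^ j < 2 ^ \<gamma>" "v' XOR 2 ^ j' < 2 ^ \<gamma>"
    using v j by (auto intro: xor_less_power)
  have eq': "2 ^ \<gamma> * v + (v XOR 2 ^ j) = 2 ^ \<gamma> * v' + (v' XOR 2 ^ j')"
    using eq unfolding mu_eq[OF assms] by simp
  have "v = (2 ^ \<gamma> * v + (v XOR 2 ^ j)) div 2 ^ \<gamma>"
    using e(1) by simp
  also have "\<dots> = v'"
    unfolding eq' using e(2) by simp
  finally have "v = v'" .
  have "v XOR 2 ^ j = (2 ^ \<gamma> * v + (v XOR 2 ^ j)) mod 2 ^ \<gamma>"
    using e(1) by simp
  also have "\<dots> = v XOR 2 ^ j'"
    unfolding eq' using e(2) \<open>v = v'\<close> by simp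
  finally have "v XOR (v XOR 2 ^ j) = v XOR (v XOR 2 ^ j')"
    by simp
  then have "(2::nat) ^ j = 2 ^ j'"
    by (simp add: xor.assoc[symmetric])
  with \<open>v = v'\<close> show "v = v' \<and> j = j'"
    by simp
qed

lemma mu_eq_xor:
  assumes "2 * \<gamma> \<le> m" "v < 2 ^ \<gamma>" "j < \<gamma>"
  shows "mu m \<gamma> v j = (2 ^ (m - \<gamma>) * v XOR 2 ^ (m - 2 * \<gamma>) * v) XOR 2 ^ (m - 2 * \<gamma> + j)"
proof -
  have "v XOR 2 ^ j < 2 ^ \<gamma>"
    using assms by (intro xor_less_power) auto
  then have "2 ^ \<gamma> * v + (v XOR 2 ^ j) = 2 ^ \<gamma> * v XOR (v XOR 2 ^ j)"
    by (rule power2_mult_add_eq_xor)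
  then have "mu m \<gamma> v j = 2 ^ (m - 2 * \<gamma>) * ((2 ^ \<gamma> * v XOR v) XOR 2 ^ j)"
    unfolding mu_eq[OF assms(1)] by (simp add: xor.assoc)
  also have "\<dots> = (2 ^ (m - 2 * \<gamma>) * (2 ^ \<gamma> * v) XOR 2 ^ (m - 2 * \<gamma>) * v) XOR 2 ^ (m - 2 * \<gamma>) * 2 ^ j"
    by (simp only: power2_mult_xor)
  also have "\<dots> = (2 ^ (m - \<gamma>) * v XOR 2 ^ (m - 2 * \<gamma>) * v) XOR 2 ^ (m - 2 * \<gamma> + j)"
  proof -
    have "m - 2 * \<gamma> + \<gamma> = m - \<gamma>"
      using assms(1) by simp
    then show ?thesis
      by (simp only: mult.assoc[symmetric] power_add[symmetric])
  qed
  finally show ?thesis .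
qed

lemma P_poly_eq_walsh_sum:
  "P_poly m \<gamma> = (\<lambda>x. \<Sum>p\<in>{..<2 ^ \<gamma>} \<times> {..<\<gamma>}. 1 / sqrt \<gamma> * walsh (case_prod (mu m \<gamma>) p) x)"
  unfolding P_poly_def sum.cartesian_product by (simp add: sum_distrib_left case_prod_unfold)

definition P_envelope :: "nat \<Rightarrow> nat \<Rightarrow> real \<Rightarrow> real" where
  "P_envelope m \<gamma> x = (\<Sum>v<2 ^ \<gamma>. walsh (2 ^ (m - \<gamma>) * v XOR 2 ^ (m - 2 * \<gamma>) * v) x)"

definition P_lacunary :: "nat \<Rightarrow> nat \<Rightarrow> real \<Rightarrow> real" where
  "P_lacunary m \<gamma> x = (\<Sum>j<\<gamma>. walsh (2 ^ (m - 2 * \<gamma> + j)) x)"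

lemma P_poly_factor:
  assumes "2 * \<gamma> \<le> m"
  shows "P_poly m \<gamma> x = P_envelope m \<gamma> x * P_lacunary m \<gamma> x / sqrt \<gamma>"
proof -
  have "(\<Sum>v<2 ^ \<gamma>. \<Sum>j<\<gamma>. walsh (mu m \<gamma> v j) x)
      = (\<Sum>v<2 ^ \<gamma>. \<Sum>j<\<gamma>. walsh (2 ^ (m - \<gamma>) * v XOR 2 ^ (m - 2 * \<gamma>) * v) x * walsh (2 ^ (m - 2 * \<gamma> + j)) x)"
    using assms by (intro sum.cong refl) (simp add: mu_eq_xor walsh_xor)
  then show ?thesis
    unfolding P_poly_def P_envelope_def P_lacunary_def sum_product by simp
qed

lemma P_envelope_square: "P_envelope m \<gamma> x * P_envelope m \<gamma> x = 2 ^ \<gamma> * P_envelope m \<gamma> x"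
proof -
  let ?w = "\<lambda>v. walsh (2 ^ (m - \<gamma>) * v XOR 2 ^ (m - 2 * \<gamma>) * v) x"
  have "(2 ^ s * v XOR 2 ^ k * v) XOR (2 ^ s * v' XOR 2 ^ k * v') = 2 ^ s * (v XOR v') XOR 2 ^ k * (v XOR v')"
    for s k v v' :: nat
    by (simp only: power2_mult_xor[symmetric] xor.assoc xor.left_commute xor.commute)
  then have w_mult: "?w v * ?w v' = ?w (v XOR v')" for v v'
    by (simp only: walsh_xor[symmetric])
  have "P_envelope m \<gamma> x * P_envelope m \<gamma> x = (\<Sum>v<2 ^ \<gamma>. \<Sum>v'<2 ^ \<gamma>. ?w (v XOR v'))"
    unfolding P_envelope_def sum_product w_mult ..
  also have "\<dots> = (\<Sum>v<(2::nat) ^ \<gamma>. P_envelope m \<gamma> x)"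
  proof (intro sum.cong refl)
    fix v :: nat
    assume "v \<in> {..<2 ^ \<gamma>}"
    then show "(\<Sum>v'<2 ^ \<gamma>. ?w (v XOR v')) = P_envelope m \<gamma> x"
      unfolding P_envelope_def
      by (intro sum.reindex_bij_witness[where i="\<lambda>u. v XOR u" and j="\<lambda>u. v XOR u"])
        (auto simp: xor.assoc[symmetric] intro: xor_less_power)
  qed
  finally show ?thesis
    by simp
qed

lemma P_envelope_cases: "P_envelope m \<gamma> x = 0 \<or> P_envelope m \<gamma> x = 2 ^ \<gamma>"
  using P_envelope_square[of m \<gamma> x] by (auto simp: algebra_simps)

lemma
  assumes "1 \<le> \<gamma>" "2 * \<gamma> \<le> m"
  shows set_integrable_P_envelope: "set_integrable lborel {0..<1} (P_envelope m \<gamma>)"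
    and integral_P_envelope: "(LINT x:{0..<1}|lborel. P_envelope m \<gamma> x) = 1"
proof -
  have envelope_eq: "P_envelope m \<gamma> = (\<lambda>x. \<Sum>v<2 ^ \<gamma>. 1 * walsh (2 ^ (m - \<gamma>) * v XOR 2 ^ (m - 2 * \<gamma>) * v) x)"
    unfolding P_envelope_def by simp
  show "set_integrable lborel {0..<1} (P_envelope m \<gamma>)"
    unfolding envelope_eq by (rule set_integrable_walsh_sum) simp
  have "m - 2 * \<gamma> < m - \<gamma>"
    using assms by simp
  then have "2 ^ (m - \<gamma>) * v XOR 2 ^ (m - 2 * \<gamma>) * v = 0 \<longleftrightarrow> v = 0" for v :: nat
    by (auto simp: xor_eq_0_iff)
  then show "(LINT x:{0..<1}|lborel. P_envelope m \<gamma> x) = 1"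
    unfolding envelope_eq integral_walsh_sum[OF finite_lessThan] by simp
qed

lemma
  assumes "1 \<le> \<gamma>" "2 * \<gamma> \<le> m"
  shows set_integrable_P_poly_square: "set_integrable lborel {0..<1} (\<lambda>x. P_poly m \<gamma> x * P_poly m \<gamma> x)"
    and integral_P_poly_square: "(LINT x:{0..<1}|lborel. P_poly m \<gamma> x * P_poly m \<gamma> x) = 2 ^ \<gamma>"
proof -
  note square = set_integrable_walsh_sum_square integral_walsh_sum_square
  note square = square[where c="\<lambda>_. 1 / sqrt \<gamma>",
      OF finite_cartesian_product[OF finite_lessThan finite_lessThan] inj_on_mu[OF assms(2)]]
  show "set_integrable lborel {0..<1} (\<lambda>x. P_poly m \<gamma> x * P_poly m \<gamma> x)"
    unfolding P_poly_eq_walsh_sum by (rule square(1))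
  show "(LINT x:{0..<1}|lborel. P_poly m \<gamma> x * P_poly m \<gamma> x) = 2 ^ \<gamma>"
    unfolding P_poly_eq_walsh_sum square(2) using assms(1) by (simp add: card_cartesian_product)
qed

lemma abs_P_poly_le_envelope:
  assumes "2 * \<gamma> \<le> m"
  shows "\<bar>P_poly m \<gamma> x\<bar> \<le> (P_poly m \<gamma> x * P_poly m \<gamma> x / 2 ^ \<gamma> + P_envelope m \<gamma> x) / 2"
  using P_envelope_cases[of m \<gamma> x]
proof
  assume "P_envelope m \<gamma> x = 0"
  then show ?thesis
    unfolding P_poly_factor[OF assms] by simp
next
  assume envelope: "P_envelope m \<gamma> x = 2 ^ \<gamma>"
  define t where "t = P_lacunary m \<gamma> x / sqrt \<gamma>"
  have P: "P_poly m \<gamma> x = 2 ^ \<gamma> * t"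
    unfolding P_poly_factor[OF assms] envelope t_def by simp
  have "2 * \<bar>t\<bar> \<le> t * t + 1"
    using sum_squares_ge_zero[of "\<bar>t\<bar> - 1" 0] by (simp add: algebra_simps)
  then have "2 ^ \<gamma> * (2 * \<bar>t\<bar>) \<le> 2 ^ \<gamma> * (t * t + 1)"
    by (rule mult_left_mono) simp
  then show ?thesis
    unfolding P envelope by (simp add: abs_mult field_simps)
qed

lemma
  assumes "1 \<le> \<gamma>" "2 * \<gamma> \<le> m"
  shows set_integrable_P_poly: "set_integrable lborel {0..<1} (P_poly m \<gamma>)"
    and integral_abs_P_poly_le_1: "(LINT x:{0..<1}|lborel. \<bar>P_poly m \<gamma> x\<bar>) \<le> 1"
proof -
  show P: "set_integrable lborel {0..<1} (P_poly m \<gamma>)"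
    unfolding P_poly_eq_walsh_sum by (rule set_integrable_walsh_sum) simp
  let ?g = "\<lambda>x. (P_poly m \<gamma> x * P_poly m \<gamma> x / 2 ^ \<gamma> + P_envelope m \<gamma> x) / 2"
  have g: "set_integrable lborel {0..<1} ?g"
    using set_integrable_P_poly_square[OF assms] set_integrable_P_envelope[OF assms]
    by (intro set_integrable_divide set_integral_add)
  have "(LINT x:{0..<1}|lborel. \<bar>P_poly m \<gamma> x\<bar>) \<le> (LINT x:{0..<1}|lborel. ?g x)"
    using abs_P_poly_le_envelope[OF assms(2)] by (intro set_integral_mono set_integrable_abs P g)
  also have "\<dots> = (2 ^ \<gamma> / 2 ^ \<gamma> + 1) / 2"
    using set_integrable_P_poly_square[OF assms] set_integrable_P_envelope[OF assms]
    by (simp add: integral_P_poly_square[OF assms] integral_P_envelope[OF assms])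
  finally show "(LINT x:{0..<1}|lborel. \<bar>P_poly m \<gamma> x\<bar>) \<le> 1"
    by simp
qed

lemma abs_P_poly_le: "\<bar>P_poly m \<gamma> x\<bar> \<le> 2 ^ \<gamma> * sqrt \<gamma>"
proof -
  have "\<bar>\<Sum>v<2 ^ \<gamma>. \<Sum>j<\<gamma>. walsh (mu m \<gamma> v j) x\<bar> \<le> (\<Sum>v<(2::nat) ^ \<gamma>. \<Sum>j<\<gamma>. \<bar>walsh (mu m \<gamma> v j) x\<bar>)"
    by (rule order_trans[OF sum_abs sum_mono[OF sum_abs]])
  also have "\<dots> = 2 ^ \<gamma> * real \<gamma>"
    by simp
  finally have "\<bar>P_poly m \<gamma> x\<bar> \<le> 2 ^ \<gamma> * (real \<gamma> / sqrt \<gamma>)"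
    unfolding P_poly_def by (simp add: abs_mult divide_right_mono)
  also have "real \<gamma> / sqrt \<gamma> = sqrt \<gamma>"
    by (rule real_div_sqrt) simp
  finally show ?thesis
    by simp
qed

lemma walsh_spec_P_poly:
  assumes "2 * \<gamma> \<le> m"
  shows "walsh_spec (P_poly m \<gamma>) \<subseteq> {2 ^ (m - 2 * \<gamma>)..<2 ^ m} \<inter> {k. 2 ^ (m - 2 * \<gamma>) dvd k}"
proof -
  have range: "mu m \<gamma> v j \<in> {2 ^ (m - 2 * \<gamma>)..<2 ^ m} \<inter> {k. 2 ^ (m - 2 * \<gamma>) dvd k}"
    if "v < 2 ^ \<gamma>" "j < \<gamma>" for v j
  proof -
    have "1 \<le> 2 ^ \<gamma> * v + (v XOR 2 ^ j)"
      by (cases "v = 0") (simp_all add: Suc_le_eq)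
    then have "2 ^ (m - 2 * \<gamma>) * 1 \<le> 2 ^ (m - 2 * \<gamma>) * (2 ^ \<gamma> * v + (v XOR 2 ^ j))"
      by (rule mult_le_mono2)
    then show ?thesis
      using mu_less[OF assms that] unfolding mu_eq[OF assms] by simp
  qed
  have "walsh_spec (P_poly m \<gamma>) \<subseteq> case_prod (mu m \<gamma>) ` ({..<2 ^ \<gamma>} \<times> {..<\<gamma>})"
    unfolding P_poly_eq_walsh_sum by (rule walsh_spec_walsh_sum) simp
  also have "\<dots> \<subseteq> {2 ^ (m - 2 * \<gamma>)..<2 ^ m} \<inter> {k. 2 ^ (m - 2 * \<gamma>) dvd k}"
    using range by (simp only: image_subset_iff) auto
  finally show ?thesis .
qed

lemma mu_less_iff:
  assumes "2 * \<gamma> \<le> m" "v < 2 ^ \<gamma>" "j < \<gamma>" "e < 2 ^ \<gamma>"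
  shows "mu m \<gamma> v j < 2 ^ (m - 2 * \<gamma>) * (2 ^ \<gamma> * V + e) \<longleftrightarrow> v < V \<or> v = V \<and> v XOR 2 ^ j < e"
proof -
  have "v XOR 2 ^ j < 2 ^ \<gamma>"
    using assms by (intro xor_less_power) auto
  then show ?thesis
    unfolding mu_eq[OF assms(1)] mult_less_cancel1 using mult_add_less_mult_add_iff[OF _ assms(4)]
    by simp
qed

lemma block_index_bounds:
  fixes V e :: nat
  assumes "2 * \<gamma> \<le> m" "0 < V" "V < 2 ^ \<gamma>" "e \<le> V"
  shows "2 ^ (m - \<gamma>) \<le> 2 ^ (m - 2 * \<gamma>) * (2 ^ \<gamma> * V + e)"
    and "2 ^ (m - 2 * \<gamma>) * (2 ^ \<gamma> * V + e) < 2 ^ m"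
proof -
  have m: "(2::nat) ^ (m - \<gamma>) = 2 ^ (m - 2 * \<gamma>) * 2 ^ \<gamma>" "(2::nat) ^ m = 2 ^ (m - 2 * \<gamma>) * (2 ^ \<gamma> * 2 ^ \<gamma>)"
    using assms(1) by (simp_all flip: power_add)
  have "2 ^ \<gamma> * 1 \<le> 2 ^ \<gamma> * V"
    using assms(2) by (intro mult_le_mono2) simp
  then have "2 ^ \<gamma> \<le> 2 ^ \<gamma> * V + e"
    by linarith
  then show "2 ^ (m - \<gamma>) \<le> 2 ^ (m - 2 * \<gamma>) * (2 ^ \<gamma> * V + e)"
    unfolding m by simp
  have "2 ^ \<gamma> * V + e < 2 ^ \<gamma> * 2 ^ \<gamma> + 0"
    using assms(3,4) by (subst mult_add_less_mult_add_iff) auto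
  then show "2 ^ (m - 2 * \<gamma>) * (2 ^ \<gamma> * V + e) < 2 ^ m"
    unfolding m by simp
qed

lemma walsh_partial_sum_P_poly_diff:
  assumes "2 * \<gamma> \<le> m" "V < 2 ^ \<gamma>"
  shows "walsh_partial_sum (P_poly m \<gamma>) (2 ^ (m - 2 * \<gamma>) * (2 ^ \<gamma> * V + V)) x
      - walsh_partial_sum (P_poly m \<gamma>) (2 ^ (m - 2 * \<gamma>) * (2 ^ \<gamma> * V)) x
    = walsh (2 ^ (m - \<gamma>) * V XOR 2 ^ (m - 2 * \<gamma>) * V) x
      * (\<Sum>j | j < \<gamma> \<and> bit V j. walsh (2 ^ (m - 2 * \<gamma> + j)) x) / sqrt \<gamma>"
proof -
  let ?w = "\<lambda>v j. 1 / sqrt \<gamma> * walsh (mu m \<gamma> v j) x"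
  let ?l1 = "2 ^ (m - 2 * \<gamma>) * (2 ^ \<gamma> * V)" and ?l2 = "2 ^ (m - 2 * \<gamma>) * (2 ^ \<gamma> * V + V)"
  have less_l1: "mu m \<gamma> v j < ?l1 \<longleftrightarrow> v < V" if "v < 2 ^ \<gamma>" "j < \<gamma>" for v j
    using mu_less_iff[OF assms(1) that, of 0 V] by simp
  have less_l2: "mu m \<gamma> v j < ?l2 \<longleftrightarrow> v < V \<or> v = V \<and> bit V j" if "v < 2 ^ \<gamma>" "j < \<gamma>" for v j
    using mu_less_iff[OF assms(1) that assms(2)] xor_power2_less_iff[of V j] by blast
  have "walsh_partial_sum (P_poly m \<gamma>) ?l2 x - walsh_partial_sum (P_poly m \<gamma>) ?l1 x
      = (\<Sum>v<2 ^ \<gamma>. \<Sum>j<\<gamma>. (if mu m \<gamma> v j < ?l2 then ?w v j else 0) - (if mu m \<gamma> v j < ?l1 then ?w v j else 0))"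
    unfolding P_poly_eq_walsh_sum walsh_partial_sum_walsh_sum[OF finite_cartesian_product[OF finite_lessThan finite_lessThan]]
    by (simp add: sum.cartesian_product sum_subtractf split_def cong: if_cong)
  also have "\<dots> = (\<Sum>v<2 ^ \<gamma>. \<Sum>j<\<gamma>. if v = V \<and> bit V j then ?w v j else 0)"
  proof (intro sum.cong refl)
    fix v j
    assume "v \<in> {..<(2::nat) ^ \<gamma>}" "j \<in> {..<\<gamma>}"
    then show "(if mu m \<gamma> v j < ?l2 then ?w v j else 0) - (if mu m \<gamma> v j < ?l1 then ?w v j else 0)
        = (if v = V \<and> bit V j then ?w v j else 0)"
      using less_l1[of v j] less_l2[of v j] by (cases "v < V") auto
  qed
  also have "\<dots> = (\<Sum>v<2 ^ \<gamma>. if v = V then (\<Sum>j<\<gamma>. if bit V j then ?w V j else 0) else 0)"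
    by (intro sum.cong refl) auto
  also have "\<dots> = (\<Sum>j<\<gamma>. if bit V j then ?w V j else 0)"
    using assms(2) by simp
  also have "\<dots> = (\<Sum>j | j < \<gamma> \<and> bit V j. ?w V j)"
    by (simp add: sum.inter_filter[symmetric])
  also have "\<dots> = (\<Sum>j | j < \<gamma> \<and> bit V j.
      1 / sqrt \<gamma> * (walsh (2 ^ (m - \<gamma>) * V XOR 2 ^ (m - 2 * \<gamma>) * V) x * walsh (2 ^ (m - 2 * \<gamma> + j)) x))"
    using assms by (intro sum.cong refl) (simp add: mu_eq_xor walsh_xor)
  finally show ?thesis
    by (simp only: sum_distrib_left[symmetric]) simp
qed

lemma obtain_majority_sign:
  fixes r :: "nat \<Rightarrow> real"
  assumes "\<And>j. \<bar>r j\<bar> = 1"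
  obtains s where "\<bar>s\<bar> = 1" "n \<le> 2 * card {j. j < n \<and> r j = s}"
proof -
  let ?J = "\<lambda>s. {j. j < n \<and> r j = s}"
  have pm: "r j = 1 \<or> r j = -1" for j
    using assms[of j] by (cases "r j < 0") auto
  have "card (?J 1) + card (?J (-1)) = card (?J 1 \<union> ?J (-1))"
    by (rule card_Un_disjoint[symmetric]) auto
  also have "?J 1 \<union> ?J (-1) = {..<n}"
    using pm by blast
  finally have card_sum: "card (?J 1) + card (?J (-1)) = n"
    by simp
  show ?thesis
  proof (cases "n \<le> 2 * card (?J 1)")
    case True
    then show ?thesis
      by (intro that[of 1]) simp_all
  next
    case False
    then have "n \<le> 2 * card (?J (-1))"
      using card_sum by linarith
    then show ?thesis
      by (intro that[of "-1"]) simp_all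
  qed
qed

lemma exists_large_walsh_partial_sum_P_poly:
  assumes "1 \<le> \<gamma>" "2 * \<gamma> \<le> m"
  shows "\<exists>l. 2 ^ (m - \<gamma>) \<le> l \<and> l < 2 ^ m \<and> 0 < l \<and> 2 ^ (m - 2 * \<gamma>) dvd l
    \<and> sqrt \<gamma> / 4 \<le> \<bar>walsh_partial_sum (P_poly m \<gamma>) l x\<bar>"
proof -
  let ?r = "\<lambda>j. walsh (2 ^ (m - 2 * \<gamma> + j)) x"
  obtain s where s: "\<bar>s\<bar> = 1" and many: "\<gamma> \<le> 2 * card {j. j < \<gamma> \<and> ?r j = s}"
    using obtain_majority_sign[of ?r] by auto
  define J where "J = {j. j < \<gamma> \<and> ?r j = s}"
  define V :: nat where "V = horner_sum of_bool 2 (map (\<lambda>j. ?r j = s) [0..<\<gamma>])"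
  have bit_V: "bit V j \<longleftrightarrow> j \<in> J" for j
    unfolding V_def J_def by (auto simp: bit_horner_sum_bit_iff)
  have V_less: "V < 2 ^ \<gamma>"
    using horner_sum_bound[of "map (\<lambda>j. ?r j = s) [0..<\<gamma>]"] unfolding V_def by simp
  have "J \<noteq> {}"
  proof
    assume "J = {}"
    with many assms(1) show False
      unfolding J_def[symmetric] by simp
  qed
  then obtain j where "bit V j"
    using bit_V by blast
  then have V_pos: "0 < V"
    by (cases "V = 0") simp_all
  let ?l1 = "2 ^ (m - 2 * \<gamma>) * (2 ^ \<gamma> * V)" and ?l2 = "2 ^ (m - 2 * \<gamma>) * (2 ^ \<gamma> * V + V)"
  have "{j. j < \<gamma> \<and> bit V j} = J"
    using bit_V unfolding J_def by auto
  then have diff: "walsh_partial_sum (P_poly m \<gamma>) ?l2 x - walsh_partial_sum (P_poly m \<gamma>) ?l1 x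
    = walsh (2 ^ (m - \<gamma>) * V XOR 2 ^ (m - 2 * \<gamma>) * V) x * (real (card J) * s) / sqrt \<gamma>"
    unfolding walsh_partial_sum_P_poly_diff[OF assms(2) V_less] by (simp add: J_def)
  have "sqrt \<gamma> / 2 = (real \<gamma> / 2) / sqrt \<gamma>"
    by (simp add: real_div_sqrt)
  also have "\<dots> \<le> real (card J) / sqrt \<gamma>"
    using many unfolding J_def by (intro divide_right_mono) auto
  also have "\<dots> = \<bar>walsh_partial_sum (P_poly m \<gamma>) ?l2 x - walsh_partial_sum (P_poly m \<gamma>) ?l1 x\<bar>"
    unfolding diff using s by (simp add: abs_mult)
  also have "\<dots> \<le> \<bar>walsh_partial_sum (P_poly m \<gamma>) ?l2 x\<bar> + \<bar>walsh_partial_sum (P_poly m \<gamma>) ?l1 x\<bar>"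
    by (rule abs_triangle_ineq4)
  finally have "sqrt \<gamma> / 4 \<le> \<bar>walsh_partial_sum (P_poly m \<gamma>) ?l1 x\<bar>
      \<or> sqrt \<gamma> / 4 \<le> \<bar>walsh_partial_sum (P_poly m \<gamma>) ?l2 x\<bar>"
    by linarith
  then have "\<exists>l\<in>{?l1, ?l2}. sqrt \<gamma> / 4 \<le> \<bar>walsh_partial_sum (P_poly m \<gamma>) l x\<bar>"
    by blast
  moreover have "2 ^ (m - \<gamma>) \<le> l \<and> l < 2 ^ m \<and> 0 < l \<and> 2 ^ (m - 2 * \<gamma>) dvd l" if "l \<in> {?l1, ?l2}" for l
    using that V_pos block_index_bounds[OF assms(2) V_pos V_less, of 0]
      block_index_bounds[OF assms(2) V_pos V_less, of V]
    by auto
  ultimately show ?thesis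
    by blast
qed

theorem proposition2p1:
  fixes m \<gamma> :: nat
  assumes "\<gamma> \<ge> 1" and "2 * \<gamma> < m"
  shows "(set_integrable lborel {0..<1} (P_poly m \<gamma>)
         \<and> (LINT x:{0..<1}|lborel. \<bar>P_poly m \<gamma> x\<bar>) \<le> 1)
    \<and> (AE x in lborel. x \<in> {0..<1} \<longrightarrow> \<bar>P_poly m \<gamma> x\<bar> \<le> 2 ^ \<gamma> * sqrt (real \<gamma>))
    \<and> walsh_spec (P_poly m \<gamma>) \<subseteq>
           {2 ^ (m - 2 * \<gamma>)..<2 ^ m} \<inter> {k. 2 ^ (m - 2 * \<gamma>) dvd k}
    \<and> (\<forall>x\<in>{0..<1::real}. \<exists>l::nat. 2 ^ (m - \<gamma>) \<le> l \<and> l < 2 ^ m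
           \<and> 0 < l \<and> 2 ^ (m - 2 * \<gamma>) dvd l
           \<and> \<bar>walsh_partial_sum (P_poly m \<gamma>) l x\<bar> \<ge> sqrt (real \<gamma>) / 4)"
proof -
  have m: "2 * \<gamma> \<le> m"
    using assms(2) by simp
  show ?thesis
    using set_integrable_P_poly[OF assms(1) m] integral_abs_P_poly_le_1[OF assms(1) m]
      abs_P_poly_le walsh_spec_P_poly[OF m] exists_large_walsh_partial_sum_P_poly[OF assms(1) m]
    by auto
qed

end
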